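(* Let $G$ be a finite connected graph with maximum degree at most $\Delta$, where $\Delta\ge2$, and with diameter $D=\mathrm{diam}(G)\ge2$ in the hop metric. Then, under geodesic routing, every vertex $v$ of $G$ satisfies $$T(v)\le \Delta^2(\Delta-1)^{D-2}D^2.$$
   Context: Geodesic routing and vertex flow on a finite connected graph $G$: $d$ denotes the hop (graph) metric; for each unordered pair of distinct vertices $\{v,w\}$ one unit of flow is sent from $v$ to $w$ along shortest paths, where at each vertex $v'$ on a shortest path the flow arriving at $v'$ is split equally among the neighbors $x$ of $v'$ with $d(x,w)=d(v',w)-1$. The vertex flow $T(u)$ of a vertex $u$ is the total flow (over all pairs, including pairs having $u$ as an endpoint) passing through $u$. *)

theory Defs
  imports Complex_Main
begin

definition simple_graph :: "'a set \<Rightarrow> ('a \<Rightarrow> 'a \<Rightarrow> bool) \<Rightarrow> bool" where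
  "simple_graph V E \<longleftrightarrow> finite V \<and> (\<forall>x y. E x y \<longrightarrow> x \<in> V \<and> y \<in> V)
     \<and> (\<forall>x y. E x y \<longrightarrow> E y x) \<and> (\<forall>x. \<not> E x x)"

definition is_walk :: "'a set \<Rightarrow> ('a \<Rightarrow> 'a \<Rightarrow> bool) \<Rightarrow> 'a \<Rightarrow> 'a \<Rightarrow> nat \<Rightarrow> 'a list \<Rightarrow> bool" where
  "is_walk V E v w n xs \<longleftrightarrow> xs \<noteq> [] \<and> hd xs = v \<and> last xs = w \<and> length xs = Suc n
     \<and> set xs \<subseteq> V \<and> successively E xs"

definition connected_graph :: "'a set \<Rightarrow> ('a \<Rightarrow> 'a \<Rightarrow> bool) \<Rightarrow> bool" where
  "connected_graph V E \<longleftrightarrow> V \<noteq> {} \<and> (\<forall>v\<in>V. \<forall>w\<in>V. \<exists>n xs. is_walk V E v w n xs)"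

definition hop_dist :: "'a set \<Rightarrow> ('a \<Rightarrow> 'a \<Rightarrow> bool) \<Rightarrow> 'a \<Rightarrow> 'a \<Rightarrow> nat" where
  "hop_dist V E v w = (LEAST n. \<exists>xs. is_walk V E v w n xs)"

definition diameter :: "'a set \<Rightarrow> ('a \<Rightarrow> 'a \<Rightarrow> bool) \<Rightarrow> nat" where
  "diameter V E = Max {hop_dist V E v w | v w. v \<in> V \<and> w \<in> V}"

definition degree :: "'a set \<Rightarrow> ('a \<Rightarrow> 'a \<Rightarrow> bool) \<Rightarrow> 'a \<Rightarrow> nat" where
  "degree V E x = card {y \<in> V. E x y}"

definition next_hops :: "'a set \<Rightarrow> ('a \<Rightarrow> 'a \<Rightarrow> bool) \<Rightarrow> 'a \<Rightarrow> 'a \<Rightarrow> 'a set" where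
  "next_hops V E x w = {y \<in> V. E x y \<and> hop_dist V E y w + 1 = hop_dist V E x w}"

text \<open>flow_level V E v w k u: flow (of the unit sent from v to w) arriving at a vertex u
  that is k steps along a geodesic from v (i.e. hop_dist u w = hop_dist v w - k).\<close>
primrec flow_level :: "'a set \<Rightarrow> ('a \<Rightarrow> 'a \<Rightarrow> bool) \<Rightarrow> 'a \<Rightarrow> 'a \<Rightarrow> nat \<Rightarrow> 'a \<Rightarrow> real" where
  "flow_level V E v w 0 u = (if u = v then 1 else 0)"
| "flow_level V E v w (Suc k) u =
     (\<Sum>p\<in>{p \<in> V. E p u \<and> hop_dist V E p w = hop_dist V E u w + 1}.
        flow_level V E v w k p / real (card (next_hops V E p w)))"

definition pair_flow :: "'a set \<Rightarrow> ('a \<Rightarrow> 'a \<Rightarrow> bool) \<Rightarrow> 'a \<Rightarrow> 'a \<Rightarrow> 'a \<Rightarrow> real" where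
  "pair_flow V E v w u =
     (if u \<in> V \<and> hop_dist V E u w \<le> hop_dist V E v w
      then flow_level V E v w (hop_dist V E v w - hop_dist V E u w) u else 0)"

text \<open>Vertex flow. Each unordered pair {v,w} is sent in the direction selected by the
  orientation ori (ori v w means the unit goes from v to w).\<close>
definition vertex_flow :: "'a set \<Rightarrow> ('a \<Rightarrow> 'a \<Rightarrow> bool) \<Rightarrow> ('a \<Rightarrow> 'a \<Rightarrow> bool) \<Rightarrow> 'a \<Rightarrow> real" where
  "vertex_flow V E ori u =
     (\<Sum>(v, w)\<in>{(v, w). v \<in> V \<and> w \<in> V \<and> v \<noteq> w \<and> ori v w}. pair_flow V E v w u)"

definition orientation :: "'a set \<Rightarrow> ('a \<Rightarrow> 'a \<Rightarrow> bool) \<Rightarrow> bool" where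
  "orientation V ori \<longleftrightarrow> (\<forall>v\<in>V. \<forall>w\<in>V. v \<noteq> w \<longrightarrow> (ori v w \<longleftrightarrow> \<not> ori w v))"

end

theory Submission imports Defs begin

(* Each ordered pair (v, w) sends one unit from v to w; the amount passing through u
   is a number in [0, 1], and it is nonzero only if u lies on a geodesic from v to w,
   i.e. d(v,u) + d(u,w) = d(v,w) \<le> D.  Hence T(u) is at most the number of oriented
   pairs (v, w) with d(v,u) + d(u,w) \<le> D.  These pairs are counted with the spheres
   S_i = {x. d(u,x) = i}, whose size is at most \<Delta>(\<Delta>-1)^(i-1) for i \<ge> 1:
   pairs with u as an endpoint are at most |V - {u}| \<le> D K many (the orientation
   picks one direction per pair), pairs avoiding u lie in some S_i \<times> S_j with
   i, j \<ge> 1, i + j \<le> D, giving at most (D-1)^2 K, where K = \<Delta>^2 (\<Delta>-1)^(D-2).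
   As D + (D-1)^2 \<le> D^2 the theorem follows. *)

definition sphere :: "'a set \<Rightarrow> ('a \<Rightarrow> 'a \<Rightarrow> bool) \<Rightarrow> 'a \<Rightarrow> nat \<Rightarrow> 'a set" where
  "sphere V E u i = {x \<in> V. hop_dist V E u x = i}"

locale connected_simple_graph =
  fixes V :: "'a set" and E :: "'a \<Rightarrow> 'a \<Rightarrow> bool"
  assumes simple: "simple_graph V E" and connected: "connected_graph V E"
begin

lemma finite_V: "finite V"
  using simple by (simp add: simple_graph_def)

lemma edge_in_V: "E x y \<Longrightarrow> x \<in> V \<and> y \<in> V"
  using simple by (simp add: simple_graph_def)

lemma edge_sym: "E x y \<Longrightarrow> E y x"
  using simple by (simp add: simple_graph_def)

lemma finite_sphere: "finite (sphere V E u i)"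
  using finite_V by (simp add: sphere_def)

subsection \<open>The hop metric\<close>

lemma shortest_walk_exists:
  assumes "v \<in> V" "w \<in> V"
  shows "\<exists>xs. is_walk V E v w (hop_dist V E v w) xs"
proof -
  from connected assms have "\<exists>n xs. is_walk V E v w n xs"
    by (auto simp: connected_graph_def)
  thus ?thesis unfolding hop_dist_def by (rule LeastI_ex)
qed

lemma hop_dist_le_walk: "is_walk V E v w n xs \<Longrightarrow> hop_dist V E v w \<le> n"
  unfolding hop_dist_def by (rule Least_le) blast

lemma hop_dist_self: "v \<in> V \<Longrightarrow> hop_dist V E v v = 0"
  using hop_dist_le_walk[of v v 0 "[v]"] by (simp add: is_walk_def)

lemma hop_dist_eq_0_imp_eq:
  assumes "v \<in> V" "w \<in> V" "hop_dist V E v w = 0"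
  shows "v = w"
proof -
  obtain xs where "is_walk V E v w 0 xs"
    using shortest_walk_exists[OF assms(1,2)] assms(3) by auto
  thus ?thesis by (cases xs) (auto simp: is_walk_def)
qed

text \<open>Reversing a walk gives a walk, since the adjacency relation is symmetric.\<close>
lemma hop_dist_sym:
  assumes "v \<in> V" "w \<in> V"
  shows "hop_dist V E v w = hop_dist V E w v"
proof -
  have rev_walk: "is_walk V E b a n (rev xs)" if "is_walk V E a b n xs" for a b n xs
    using that by (auto simp: is_walk_def hd_rev last_rev successively_rev
        intro: successively_mono[where P=E] edge_sym)
  have "hop_dist V E b a \<le> hop_dist V E a b" if "a \<in> V" "b \<in> V" for a b
    using shortest_walk_exists[OF that] rev_walk hop_dist_le_walk by blast
  with assms show ?thesis by (simp add: order_antisym)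
qed

lemma hop_dist_edge:
  assumes "v \<in> V" "E p x"
  shows "hop_dist V E v x \<le> hop_dist V E v p + 1"
proof -
  have pV: "p \<in> V" "x \<in> V" using edge_in_V assms by auto
  obtain xs where "is_walk V E v p (hop_dist V E v p) xs"
    using shortest_walk_exists assms pV by blast
  hence "is_walk V E v x (hop_dist V E v p + 1) (xs @ [x])"
    using assms pV by (auto simp: is_walk_def successively_append_iff)
  thus ?thesis by (rule hop_dist_le_walk)
qed

text \<open>A vertex at distance i+1 from v has a neighbour at distance i (the
  second-to-last vertex of a shortest walk).\<close>
lemma hop_dist_predecessor:
  assumes "v \<in> V" "w \<in> V" "hop_dist V E v w = Suc i"
  shows "\<exists>y\<in>V. E y w \<and> hop_dist V E v y = i"
proof -
  obtain xs where xs: "is_walk V E v w (Suc i) xs"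
    using shortest_walk_exists assms by fastforce
  define ys where "ys = butlast xs"
  have len: "length ys = Suc i" and xs_eq: "xs = ys @ [w]"
    using xs by (auto simp: is_walk_def ys_def append_butlast_last_id)
  then have "ys \<noteq> []" by auto
  then have walk: "is_walk V E v (last ys) i ys" and edge: "E (last ys) w"
    using xs len unfolding xs_eq by (auto simp: is_walk_def successively_append_iff)
  have "hop_dist V E v (last ys) \<le> i" using walk hop_dist_le_walk by blast
  moreover have "Suc i \<le> hop_dist V E v (last ys) + 1"
    using hop_dist_edge[OF assms(1) edge] assms(3) by simp
  ultimately show ?thesis using edge edge_in_V by force
qed

lemma hop_dist_le_diameter:
  assumes "v \<in> V" "w \<in> V"
  shows "hop_dist V E v w \<le> diameter V E"
proof -
  have "{hop_dist V E v w | v w. v \<in> V \<and> w \<in> V} = (\<lambda>(v, w). hop_dist V E v w) ` (V \<times> V)"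
    by auto
  then have "finite {hop_dist V E v w | v w. v \<in> V \<and> w \<in> V}"
    using finite_V by simp
  then show ?thesis unfolding diameter_def by (rule Max_ge) (use assms in blast)
qed

lemma V_minus_centre_sub_spheres:
  assumes "u \<in> V"
  shows "V - {u} \<subseteq> (\<Union>j\<in>{1..diameter V E}. sphere V E u j)"
  using hop_dist_eq_0_imp_eq[OF assms] hop_dist_le_diameter[OF assms]
  by (fastforce simp: sphere_def)

subsection \<open>Size of spheres\<close>

lemma card_sphere_1:
  assumes "u \<in> V" "\<forall>x\<in>V. degree V E x \<le> \<Delta>"
  shows "card (sphere V E u 1) \<le> \<Delta>"
proof -
  have "sphere V E u 1 \<subseteq> {y \<in> V. E u y}"
    using hop_dist_predecessor[OF assms(1), of _ 0] hop_dist_eq_0_imp_eq[OF assms(1)]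
    by (fastforce simp: sphere_def)
  then have "card (sphere V E u 1) \<le> card {y \<in> V. E u y}"
    by (rule card_mono[rotated]) (simp add: finite_V)
  also have "\<dots> \<le> \<Delta>" using assms by (auto simp: degree_def)
  finally show ?thesis .
qed

text \<open>For i \<ge> 1 every vertex of S_i has a neighbour in S_(i-1), so it has at most
  \<Delta> - 1 neighbours in S_(i+1); and every vertex of S_(i+1) has a neighbour in S_i.\<close>
lemma card_sphere_Suc:
  assumes "u \<in> V" "i \<ge> 1" "\<forall>x\<in>V. degree V E x \<le> \<Delta>"
  shows "card (sphere V E u (Suc i)) \<le> card (sphere V E u i) * (\<Delta> - 1)"
proof -
  define N where "N y = {z \<in> V. E y z \<and> hop_dist V E u z = Suc i}" for y
  have cover: "sphere V E u (Suc i) \<subseteq> (\<Union>y\<in>sphere V E u i. N y)"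
    using hop_dist_predecessor[OF assms(1)] by (fastforce simp: sphere_def N_def)
  have N_card: "card (N y) \<le> \<Delta> - 1" if y: "y \<in> sphere V E u i" for y
  proof -
    obtain j where j: "i = Suc j" using assms(2) by (cases i) auto
    obtain p where p: "p \<in> V" "E p y" "hop_dist V E u p = j"
      using hop_dist_predecessor[OF assms(1), of y j] y j by (auto simp: sphere_def)
    have "N y \<subseteq> {z \<in> V. E y z} - {p}" using p j by (auto simp: N_def)
    hence "card (N y) \<le> card ({z \<in> V. E y z} - {p})"
      by (rule card_mono[rotated]) (simp add: finite_V)
    also have "\<dots> = card {z \<in> V. E y z} - 1" using p edge_sym by (simp add: finite_V)
    also have "\<dots> \<le> \<Delta> - 1" using assms(3) y by (auto simp: degree_def sphere_def)
    finally show ?thesis .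
  qed
  have "card (sphere V E u (Suc i)) \<le> card (\<Union>y\<in>sphere V E u i. N y)"
    by (rule card_mono[OF _ cover]) (auto simp: finite_sphere N_def finite_V)
  also have "\<dots> \<le> (\<Sum>y\<in>sphere V E u i. card (N y))"
    by (rule card_UN_le[OF finite_sphere])
  also have "\<dots> \<le> (\<Sum>y\<in>sphere V E u i. \<Delta> - 1)" by (rule sum_mono) (rule N_card)
  also have "\<dots> = card (sphere V E u i) * (\<Delta> - 1)" by simp
  finally show ?thesis .
qed

lemma card_sphere:
  assumes "u \<in> V" "i \<ge> 1" "\<forall>x\<in>V. degree V E x \<le> \<Delta>"
  shows "card (sphere V E u i) \<le> \<Delta> * (\<Delta> - 1) ^ (i - 1)"
  using assms(2)
proof (induction i rule: dec_induct)
  case base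
  then show ?case using card_sphere_1[OF assms(1,3)] by simp
next
  case (step n)
  have "card (sphere V E u (Suc n)) \<le> card (sphere V E u n) * (\<Delta> - 1)"
    by (rule card_sphere_Suc[OF assms(1) step(1) assms(3)])
  also have "\<dots> \<le> \<Delta> * (\<Delta> - 1) ^ (n - 1) * (\<Delta> - 1)" using step(3) by simp
  also have "\<dots> = \<Delta> * (\<Delta> - 1) ^ (Suc n - 1)" using step(1)
    by (cases n) (auto simp: mult.assoc)
  finally show ?case .
qed

subsection \<open>Mass of the geodesic flow\<close>

lemma flow_level_nonneg: "flow_level V E v w k x \<ge> 0"
  by (induction k arbitrary: x) (auto intro!: sum_nonneg divide_nonneg_nonneg)

text \<open>Splitting never creates mass: each vertex passes on at most what arrives at it
  (exactly that, unless it has no next hop), so the total at every level is \<le> 1.\<close>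
lemma flow_level_total_le_1:
  assumes "v \<in> V"
  shows "(\<Sum>x\<in>V. flow_level V E v w k x) \<le> 1"
proof (induction k)
  case 0
  show ?case using assms finite_V by (simp add: sum.delta)
next
  case (Suc k)
  define R where "R p x \<longleftrightarrow> E p x \<and> hop_dist V E p w = hop_dist V E x w + 1" for p x
  define g where "g p = flow_level V E v w k p / real (card (next_hops V E p w))" for p
  have "(\<Sum>x\<in>V. flow_level V E v w (Suc k) x) = (\<Sum>x\<in>V. \<Sum>p\<in>{p. p \<in> V \<and> R p x}. g p)"
    by (simp add: R_def g_def)
  also have "\<dots> = (\<Sum>p\<in>V. \<Sum>x\<in>{x. x \<in> V \<and> R p x}. g p)"
    by (rule sum.swap_restrict[OF finite_V finite_V, symmetric])
  also have "\<dots> = (\<Sum>p\<in>V. real (card (next_hops V E p w)) * g p)"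
  proof (rule sum.cong[OF refl])
    fix p
    have "{x. x \<in> V \<and> R p x} = next_hops V E p w" by (auto simp: R_def next_hops_def)
    thus "(\<Sum>x\<in>{x. x \<in> V \<and> R p x}. g p) = real (card (next_hops V E p w)) * g p" by simp
  qed
  also have "\<dots> \<le> (\<Sum>p\<in>V. flow_level V E v w k p)"
    by (rule sum_mono) (auto simp: g_def intro: flow_level_nonneg)
  also have "\<dots> \<le> 1" by (rule Suc.IH)
  finally show ?case .
qed

lemma flow_level_le_1:
  assumes "v \<in> V" "x \<in> V"
  shows "flow_level V E v w k x \<le> 1"
proof -
  have "flow_level V E v w k x \<le> (\<Sum>x\<in>V. flow_level V E v w k x)"
    by (rule member_le_sum[OF assms(2)]) (auto intro: flow_level_nonneg finite_V)
  thus ?thesis using flow_level_total_le_1[OF assms(1), of w k] by simp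
qed

lemma flow_level_support:
  assumes "v \<in> V" "flow_level V E v w k x \<noteq> 0"
  shows "x \<in> V \<and> hop_dist V E v x \<le> k"
  using assms(2)
proof (induction k arbitrary: x)
  case 0
  then show ?case using assms(1) hop_dist_self by (auto split: if_splits)
next
  case (Suc k)
  then obtain p where p: "E p x" "flow_level V E v w k p \<noteq> 0"
    by (auto elim!: sum.not_neutral_contains_not_neutral)
  with Suc.IH edge_in_V hop_dist_edge[OF assms(1) p(1)] show ?case by fastforce
qed

lemma pair_flow_bounds:
  assumes "v \<in> V"
  shows "0 \<le> pair_flow V E v w u \<and> pair_flow V E v w u \<le> 1"
  using flow_level_nonneg flow_level_le_1[OF assms] by (auto simp: pair_flow_def)

lemma pair_flow_nonzero_geodesic:
  assumes "v \<in> V" "pair_flow V E v w u \<noteq> 0"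
  shows "hop_dist V E v u + hop_dist V E u w \<le> hop_dist V E v w"
proof -
  have "hop_dist V E u w \<le> hop_dist V E v w"
    and "flow_level V E v w (hop_dist V E v w - hop_dist V E u w) u \<noteq> 0"
    using assms(2) by (auto simp: pair_flow_def split: if_splits)
  with flow_level_support[OF assms(1)] show ?thesis by fastforce
qed

definition through_pairs :: "('a \<Rightarrow> 'a \<Rightarrow> bool) \<Rightarrow> 'a \<Rightarrow> ('a \<times> 'a) set" where
  "through_pairs ori u = {(v, w). v \<in> V \<and> w \<in> V \<and> v \<noteq> w \<and> ori v w
     \<and> hop_dist V E v u + hop_dist V E u w \<le> diameter V E}"

lemma vertex_flow_le_card_through_pairs:
  "vertex_flow V E ori u \<le> real (card (through_pairs ori u))"
proof -
  define A where "A = {(v, w). v \<in> V \<and> w \<in> V \<and> v \<noteq> w \<and> ori v w}"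
  have finA: "finite A" by (rule finite_subset[of _ "V \<times> V"]) (auto simp: A_def finite_V)
  have sub: "through_pairs ori u \<subseteq> A" by (auto simp: A_def through_pairs_def)
  have outside_zero: "pair_flow V E v w u = 0" if "(v, w) \<in> A - through_pairs ori u" for v w
    using that pair_flow_nonzero_geodesic hop_dist_le_diameter
    by (force simp: A_def through_pairs_def)
  have "vertex_flow V E ori u = (\<Sum>(v, w)\<in>A. pair_flow V E v w u)"
    by (simp add: vertex_flow_def A_def)
  also have "\<dots> = (\<Sum>(v, w)\<in>through_pairs ori u. pair_flow V E v w u)"
    by (rule sum.mono_neutral_right[OF finA sub]) (use outside_zero in auto)
  also have "\<dots> \<le> (\<Sum>(v, w)\<in>through_pairs ori u. 1)"
    by (rule sum_mono) (use pair_flow_bounds in \<open>auto simp: through_pairs_def\<close>)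
  finally show ?thesis by simp
qed

subsection \<open>Counting the pairs\<close>

lemma card_sphere_le_K:
  assumes "u \<in> V" "\<forall>x\<in>V. degree V E x \<le> \<Delta>" "\<Delta> \<ge> 2" "1 \<le> j" "j \<le> D" "D \<ge> 2"
  shows "card (sphere V E u j) \<le> \<Delta> ^ 2 * (\<Delta> - 1) ^ (D - 2)"
proof -
  have "card (sphere V E u j) \<le> \<Delta> * (\<Delta> - 1) ^ (j - 1)"
    using card_sphere assms by blast
  also have "\<dots> \<le> \<Delta> * (\<Delta> - 1) ^ (D - 1)"
    using assms by (intro mult_le_mono2 power_increasing) auto
  also have "\<dots> = \<Delta> * (\<Delta> - 1) * (\<Delta> - 1) ^ (D - 2)"
    using assms(6) by (metis Suc_diff_Suc Suc_1 Suc_le_lessD mult.assoc power_Suc diff_Suc_1)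
  also have "\<dots> \<le> \<Delta> ^ 2 * (\<Delta> - 1) ^ (D - 2)"
    unfolding power2_eq_square by (intro mult_le_mono1 mult_le_mono2) simp
  finally show ?thesis .
qed

lemma card_sphere_product_le_K:
  assumes "u \<in> V" "\<forall>x\<in>V. degree V E x \<le> \<Delta>" "\<Delta> \<ge> 2" "1 \<le> i" "1 \<le> j" "i + j \<le> D"
  shows "card (sphere V E u i \<times> sphere V E u j) \<le> \<Delta> ^ 2 * (\<Delta> - 1) ^ (D - 2)"
proof -
  have "card (sphere V E u i \<times> sphere V E u j)
        = card (sphere V E u i) * card (sphere V E u j)"
    by (simp add: card_cartesian_product)
  also have "\<dots> \<le> (\<Delta> * (\<Delta> - 1) ^ (i - 1)) * (\<Delta> * (\<Delta> - 1) ^ (j - 1))"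
    using card_sphere assms by (intro mult_le_mono) auto
  also have "\<dots> = \<Delta> ^ 2 * (\<Delta> - 1) ^ ((i - 1) + (j - 1))"
    by (simp add: power_add power2_eq_square ac_simps)
  also have "\<dots> \<le> \<Delta> ^ 2 * (\<Delta> - 1) ^ (D - 2)"
    using assms by (intro mult_le_mono2 power_increasing) auto
  finally show ?thesis .
qed

text \<open>Pairs with u as an endpoint: by the orientation, such a pair is determined by
  its other endpoint, a vertex of V - {u}.\<close>
lemma card_through_pairs_at_u:
  assumes "orientation V ori" "u \<in> V" "\<forall>x\<in>V. degree V E x \<le> \<Delta>" "\<Delta> \<ge> 2"
    and "diameter V E \<ge> 2"
  shows "card {p \<in> through_pairs ori u. fst p = u \<or> snd p = u}
         \<le> diameter V E * (\<Delta> ^ 2 * (\<Delta> - 1) ^ (diameter V E - 2))"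
    (is "card ?P \<le> ?D * ?K")
proof -
  let ?other = "\<lambda>(v, w). if v = u then w else v"
  have "card ?P \<le> card (V - {u})"
  proof (rule card_inj_on_le[where f = ?other])
    show "inj_on ?other ?P"
      using assms(1) by (auto simp: inj_on_def through_pairs_def orientation_def)
  qed (use finite_V in \<open>auto simp: through_pairs_def\<close>)
  also have "\<dots> \<le> card (\<Union>j\<in>{1..?D}. sphere V E u j)"
    by (rule card_mono[OF _ V_minus_centre_sub_spheres[OF assms(2)]]) (simp add: finite_sphere)
  also have "\<dots> \<le> (\<Sum>j\<in>{1..?D}. card (sphere V E u j))" by (rule card_UN_le) simp
  also have "\<dots> \<le> (\<Sum>j\<in>{1..?D}. ?K)"
    by (rule sum_mono) (use card_sphere_le_K assms in auto)
  finally show ?thesis by simp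
qed

lemma card_through_pairs_off_u:
  assumes "u \<in> V" "\<forall>x\<in>V. degree V E x \<le> \<Delta>" "\<Delta> \<ge> 2"
  shows "card {p \<in> through_pairs ori u. fst p \<noteq> u \<and> snd p \<noteq> u}
         \<le> (diameter V E - 1) ^ 2 * (\<Delta> ^ 2 * (\<Delta> - 1) ^ (diameter V E - 2))"
    (is "card ?P \<le> (?D - 1) ^ 2 * ?K")
proof -
  define I where "I = {p \<in> {1..?D - 1} \<times> {1..?D - 1}. fst p + snd p \<le> ?D}"
  have finI: "finite I" by (simp add: I_def)
  have "?P \<subseteq> (\<Union>(i, j)\<in>I. sphere V E u i \<times> sphere V E u j)"
  proof
    fix p assume p: "p \<in> ?P"
    then obtain v w where vw: "p = (v, w)" "v \<in> V" "w \<in> V" "v \<noteq> u" "w \<noteq> u"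
      and sum: "hop_dist V E v u + hop_dist V E u w \<le> ?D"
      by (auto simp: through_pairs_def)
    have "hop_dist V E u v \<noteq> 0" "hop_dist V E u w \<noteq> 0"
      using hop_dist_eq_0_imp_eq[OF assms(1)] vw by auto
    with sum have "(hop_dist V E u v, hop_dist V E u w) \<in> I"
      using hop_dist_sym[OF vw(2) assms(1)] by (auto simp: I_def)
    then show "p \<in> (\<Union>(i, j)\<in>I. sphere V E u i \<times> sphere V E u j)"
      using vw by (auto simp: sphere_def)
  qed
  then have "card ?P \<le> card (\<Union>(i, j)\<in>I. sphere V E u i \<times> sphere V E u j)"
    by (rule card_mono[rotated]) (use finI finite_sphere in auto)
  also have "\<dots> \<le> (\<Sum>(i, j)\<in>I. card (sphere V E u i \<times> sphere V E u j))"
    using card_UN_le[OF finI, of "\<lambda>(i, j). sphere V E u i \<times> sphere V E u j"]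
    by (simp add: case_prod_unfold)
  also have "\<dots> \<le> (\<Sum>(i, j)\<in>I. ?K)"
    by (rule sum_mono) (use card_sphere_product_le_K assms in \<open>auto simp: I_def\<close>)
  also have "\<dots> = card I * ?K" by simp
  also have "\<dots> \<le> (?D - 1) ^ 2 * ?K"
  proof -
    have "card I \<le> card ({1..?D - 1} \<times> {1..?D - 1})" by (rule card_mono) (auto simp: I_def)
    then show ?thesis by (simp add: power2_eq_square)
  qed
  finally show ?thesis .
qed

lemma card_through_pairs:
  assumes "orientation V ori" "u \<in> V" "\<forall>x\<in>V. degree V E x \<le> \<Delta>" "\<Delta> \<ge> 2"
    and "diameter V E \<ge> 2"
  shows "card (through_pairs ori u)
         \<le> diameter V E ^ 2 * (\<Delta> ^ 2 * (\<Delta> - 1) ^ (diameter V E - 2))"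
    (is "card ?P \<le> ?D ^ 2 * ?K")
proof -
  have split: "?P = {p \<in> ?P. fst p = u \<or> snd p = u} \<union> {p \<in> ?P. fst p \<noteq> u \<and> snd p \<noteq> u}"
    by blast
  have "card ?P \<le> card {p \<in> ?P. fst p = u \<or> snd p = u}
                   + card {p \<in> ?P. fst p \<noteq> u \<and> snd p \<noteq> u}"
    by (subst split) (rule card_Un_le)
  also have "\<dots> \<le> ?D * ?K + (?D - 1) ^ 2 * ?K"
    using card_through_pairs_at_u[OF assms] card_through_pairs_off_u[OF assms(2-4)]
    by (rule add_mono)
  also have "\<dots> = (?D + (?D - 1) ^ 2) * ?K" by (simp add: add_mult_distrib)
  also have "\<dots> \<le> ?D ^ 2 * ?K"
  proof -
    have "?D + (?D - 1) ^ 2 \<le> ?D ^ 2"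
      using assms(5) by (cases ?D) (auto simp: power2_eq_square)
    then show ?thesis by simp
  qed
  finally show ?thesis .
qed

end

theorem mainTheorem3:
  fixes V :: "'a set" and E :: "'a \<Rightarrow> 'a \<Rightarrow> bool" and \<Delta> :: nat
    and ori :: "'a \<Rightarrow> 'a \<Rightarrow> bool" and u :: 'a
  assumes "simple_graph V E"
    and "connected_graph V E"
    and "\<forall>x\<in>V. degree V E x \<le> \<Delta>"
    and "\<Delta> \<ge> 2"
    and "diameter V E \<ge> 2"
    and "orientation V ori"
    and "u \<in> V"
  shows "vertex_flow V E ori u
           \<le> real \<Delta> ^ 2 * (real \<Delta> - 1) ^ (diameter V E - 2) * real (diameter V E) ^ 2"
proof -
  interpret connected_simple_graph V E using assms(1,2) by unfold_locales
  let ?D = "diameter V E"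
  have "vertex_flow V E ori u \<le> real (card (through_pairs ori u))"
    by (rule vertex_flow_le_card_through_pairs)
  also have "\<dots> \<le> real (?D ^ 2 * (\<Delta> ^ 2 * (\<Delta> - 1) ^ (?D - 2)))"
    using card_through_pairs[OF assms(6,7,3,4,5)] by (rule of_nat_mono)
  also have "\<dots> = real \<Delta> ^ 2 * (real \<Delta> - 1) ^ (?D - 2) * real ?D ^ 2"
    using assms(4) by (simp add: of_nat_diff)
  finally show ?thesis .
qed

end
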